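(* Let $k\in\mathbb{Z}_+$ and let $a\in L_1(\mathbb{R}_+)$ be such that $\gamma_{a,k}\in L_\infty(\mathbb{R}_+)$, where $\gamma_{a,k}(\xi)=2\xi\int_{\mathbb{R}_+}a(v)\,\ell_k^2(2v\xi)\,\mathrm{d}v$, $\xi>0$. Then for each $n=1,2,\dots$, $$\lim_{\xi\to+\infty}\frac{\mathrm{d}^n\gamma_{a,k}(\xi)}{\mathrm{d}\xi^n}=0.$$
   Context: $\mathbb{R}_+=(0,\infty)$, $\mathbb{Z}_+=\{0,1,2,\dots\}$. $L_k(x)=\sum_{i=0}^k(-1)^i\binom{k}{i}\frac{x^i}{i!}$ is the Laguerre polynomial of degree $k$ and $\ell_k(x)=e^{-x/2}L_k(x)$. *)

theory Defs
  imports "HOL-Analysis.Analysis"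
begin

definition laguerre :: "nat \<Rightarrow> real \<Rightarrow> real" where
  "laguerre k x = (\<Sum>i=0..k. (-1)^i * real (k choose i) * x^i / fact i)"

definition laguerre_fun :: "nat \<Rightarrow> real \<Rightarrow> real" where
  "laguerre_fun k x = exp (- x / 2) * laguerre k x"

definition gamma_ak :: "(real \<Rightarrow> real) \<Rightarrow> nat \<Rightarrow> real \<Rightarrow> real" where
  "gamma_ak a k \<xi> = 2 * \<xi> * (LINT v:{0<..}|lborel. a v * (laguerre_fun k (2 * v * \<xi>))^2)"

end

theory Submission
  imports Defs "HOL-Computational_Algebra.Polynomial"
begin

text \<open>
  With the polynomial \<open>P(x) = L\<^sub>k(2x)\<^sup>2\<close> one has \<open>\<ell>\<^sub>k(2v\<xi>)\<^sup>2 = exp(-2v\<xi>) P(v\<xi>)\<close>, so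
  \<open>\<gamma>\<^sub>a\<^sub>,\<^sub>k(\<xi>) = 2\<xi> \<Phi>(\<xi>)\<close> with \<open>\<Phi>(\<xi>) = \<integral> a(v) v^m exp(-2v\<xi>) p(v\<xi>) dv\<close> for \<open>m = 0\<close>, \<open>p = P\<close>.
  Because \<open>x^m exp(-2x) p(x)\<close> is bounded on \<open>[0,\<infinity>)\<close>, the integrand and its \<open>\<xi>\<close>-derivative
  are dominated by multiples of \<open>|a|\<close>, locally uniformly in \<open>\<xi> > 0\<close>; differentiating under the
  integral sign replaces \<open>(m, p)\<close> by \<open>(m + 1, p' - 2p)\<close>, and the Leibniz rule gives
  \<open>\<gamma>\<^sup>(\<^sup>n\<^sup>) = 2\<xi> \<Phi>\<^sub>n + 2n \<Phi>\<^sub>n\<^sub>-\<^sub>1\<close>. Finally \<open>\<xi>^m \<Phi>(\<xi>) = \<integral> a(v) (v\<xi>)^m exp(-2v\<xi>) p(v\<xi>) dv\<close> tends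
  to 0 by dominated convergence, so both terms vanish at infinity once \<open>n \<ge> 1\<close>.
\<close>

lemma integral_dominated_convergence_at:
  fixes s :: "'c::first_countable_topology \<Rightarrow> 'a \<Rightarrow> 'b::{banach, second_countable_topology}"
  assumes "f \<in> borel_measurable M" and "integrable M w"
    and lim: "AE v in M. ((\<lambda>t. s t v) \<longlongrightarrow> f v) (at x)"
    and bound: "\<forall>\<^sub>F t in at x. s t \<in> borel_measurable M \<and> (AE v in M. norm (s t v) \<le> w v)"
  shows "((\<lambda>t. integral\<^sup>L M (s t)) \<longlongrightarrow> integral\<^sup>L M f) (at x)"
  unfolding tendsto_at_iff_sequentially comp_def
proof (intro allI impI)
  fix X :: "nat \<Rightarrow> 'c"
  assume "\<forall>i. X i \<in> UNIV - {x}" and "X \<longlonglongrightarrow> x"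
  then have X: "filterlim X (at x) sequentially"
    by (simp add: filterlim_at)
  from filterlim_iff[THEN iffD1, OF X, rule_format, OF bound]
  obtain N where N: "\<And>n. N \<le> n \<Longrightarrow> s (X n) \<in> borel_measurable M \<and> (AE v in M. norm (s (X n) v) \<le> w v)"
    by (auto simp: eventually_sequentially)
  show "(\<lambda>n. integral\<^sup>L M (s (X n))) \<longlonglongrightarrow> integral\<^sup>L M f"
  proof (rule LIMSEQ_offset, rule integral_dominated_convergence)
    show "AE v in M. (\<lambda>n. s (X (n + N)) v) \<longlonglongrightarrow> f v"
      using lim
    proof eventually_elim
      case (elim v)
      from filterlim_compose[OF elim X] show ?case
        by (rule LIMSEQ_ignore_initial_segment[unfolded comp_def])
    qed
  qed (use N assms(1,2) in auto)
qed

lemma has_real_derivative_integral: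
  fixes f f' :: "real \<Rightarrow> 'a \<Rightarrow> real"
  assumes "0 < r" and "integrable M w"
    and int: "\<And>x. x \<in> ball x0 r \<Longrightarrow> integrable M (f x)"
    and meas: "f' x0 \<in> borel_measurable M"
    and deriv: "\<And>x v. x \<in> ball x0 r \<Longrightarrow> ((\<lambda>x. f x v) has_real_derivative f' x v) (at x)"
    and bound: "\<And>x v. x \<in> ball x0 r \<Longrightarrow> \<bar>f' x v\<bar> \<le> w v"
  shows "((\<lambda>x. LINT v|M. f x v) has_real_derivative (LINT v|M. f' x0 v)) (at x0)"
proof -
  define q where "q x v = (f x v - f x0 v) / (x - x0)" for x v
  have near: "\<forall>\<^sub>F x in at x0. x \<in> ball x0 r"
    using \<open>0 < r\<close> by (intro eventually_at_in_open') auto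
  have quotient_bound: "\<bar>q x v\<bar> \<le> w v" if "x \<in> ball x0 r" "x \<noteq> x0" for x v
  proof -
    have "norm (f x v - f x0 v) \<le> w v * norm (x - x0)"
      by (rule field_differentiable_bound[of "ball x0 r"])
         (use that \<open>0 < r\<close> deriv bound in \<open>auto intro: has_field_derivative_at_within\<close>)
    with that show ?thesis
      by (simp add: q_def abs_divide divide_le_eq)
  qed
  have "((\<lambda>x. LINT v|M. q x v) \<longlongrightarrow> (LINT v|M. f' x0 v)) (at x0)"
  proof (rule integral_dominated_convergence_at[OF meas \<open>integrable M w\<close>])
    show "AE v in M. ((\<lambda>x. q x v) \<longlongrightarrow> f' x0 v) (at x0)"
      using deriv \<open>0 < r\<close> by (simp add: q_def has_field_derivative_iff)
    show "\<forall>\<^sub>F x in at x0. q x \<in> borel_measurable M \<and> (AE v in M. norm (q x v) \<le> w v)"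
    proof (rule eventually_mono[OF eventually_conj[OF near eventually_neq_at_within]])
      fix x assume x: "x \<in> ball x0 r \<and> x \<noteq> x0"
      have [measurable]: "f x \<in> borel_measurable M" "f x0 \<in> borel_measurable M"
        using int[of x] int[of x0] x \<open>0 < r\<close> by auto
      have "q x \<in> borel_measurable M"
        unfolding q_def[abs_def] by measurable
      with x quotient_bound show "q x \<in> borel_measurable M \<and> (AE v in M. norm (q x v) \<le> w v)"
        by auto
    qed
  qed
  moreover have "\<forall>\<^sub>F x in at x0. (LINT v|M. q x v) = ((LINT v|M. f x v) - (LINT v|M. f x0 v)) / (x - x0)"
    using near by eventually_elim (simp add: q_def int \<open>0 < r\<close>)
  ultimately show ?thesis
    unfolding has_field_derivative_iff by (rule Lim_transform_eventually)
qed

lemma deriv_funpow_eq_on_open: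
  fixes F :: "real \<Rightarrow> real" and G :: "nat \<Rightarrow> real \<Rightarrow> real"
  assumes "open S" and base: "\<And>x. x \<in> S \<Longrightarrow> F x = G 0 x"
    and step: "\<And>n x. x \<in> S \<Longrightarrow> (G n has_real_derivative G (Suc n) x) (at x)"
  shows "x \<in> S \<Longrightarrow> (deriv ^^ n) F x = G n x"
proof (induction n arbitrary: x)
  case (Suc n)
  have "((deriv ^^ n) F has_real_derivative G (Suc n) x) (at x)"
    by (rule has_field_derivative_transform_within_open[OF step[OF Suc.prems] \<open>open S\<close>])
       (use Suc in auto)
  then show ?case
    by (simp add: DERIV_imp_deriv)
qed (simp add: base)

definition decay_poly :: "real poly \<Rightarrow> real \<Rightarrow> real" where
  "decay_poly p x = exp (- 2 * x) * poly p x"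

definition decay_pderiv :: "real poly \<Rightarrow> real poly" where
  "decay_pderiv p = pderiv p - smult 2 p"

lemma decay_poly_has_real_derivative:
  "(decay_poly p has_real_derivative decay_poly (decay_pderiv p) x) (at x)"
  unfolding decay_poly_def decay_pderiv_def
  by (auto intro!: derivative_eq_intros poly_DERIV simp: algebra_simps)

lemma continuous_on_decay_poly: "continuous_on A (decay_poly p)"
  unfolding decay_poly_def by (intro continuous_intros continuous_on_poly)

lemma power_mult_decay_poly: "x ^ m * decay_poly p x = decay_poly (monom 1 m * p) x"
  by (simp add: decay_poly_def poly_monom)

lemma decay_poly_tendsto_0: "(decay_poly p \<longlongrightarrow> 0) at_top"
proof -
  have monomial: "((\<lambda>x::real. exp (- 2 * x) * x ^ i) \<longlongrightarrow> 0) at_top" for i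
  proof -
    have "((\<lambda>x::real. (x ^ i / exp x) * exp (- x)) \<longlongrightarrow> 0 * 0) at_top"
      by (intro tendsto_mult tendsto_power_div_exp_0) real_asymp
    moreover have "(x ^ i / exp x) * exp (- x) = exp (- 2 * x) * x ^ i" for x :: real
      by (simp add: exp_minus field_simps flip: exp_add)
    ultimately show ?thesis
      by simp
  qed
  have "decay_poly p = (\<lambda>x. \<Sum>i\<le>degree p. coeff p i * (exp (- 2 * x) * x ^ i))"
    by (simp add: decay_poly_def poly_altdef sum_distrib_left mult_ac fun_eq_iff)
  moreover have "((\<lambda>x. \<Sum>i\<le>degree p. coeff p i * (exp (- 2 * x) * x ^ i))
      \<longlongrightarrow> (\<Sum>i\<le>degree p. coeff p i * 0)) at_top"
    by (intro tendsto_sum tendsto_mult tendsto_const monomial)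
  ultimately show ?thesis
    by simp
qed

lemma decay_poly_bounded: "\<exists>B. \<forall>x\<ge>0. \<bar>decay_poly p x\<bar> \<le> B"
proof -
  obtain R where R: "\<And>x. x \<ge> R \<Longrightarrow> \<bar>decay_poly p x\<bar> < 1"
    using tendstoD[OF decay_poly_tendsto_0[of p], of 1]
    by (auto simp: eventually_at_top_linorder)
  have "compact (decay_poly p ` {0..R})"
    by (intro compact_continuous_image continuous_on_decay_poly compact_Icc)
  then obtain B where B: "\<And>y. y \<in> decay_poly p ` {0..R} \<Longrightarrow> \<bar>y\<bar> \<le> B"
    using compact_imp_bounded bounded_iff by (metis real_norm_def)
  have "\<bar>decay_poly p x\<bar> \<le> max B 1" if "x \<ge> 0" for x
    using that B[of "decay_poly p x"] R[of x] by (cases "x \<le> R") force+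
  then show ?thesis
    by blast
qed

lemma decay_poly_scaled_bound:
  assumes B: "\<forall>x\<ge>0. \<bar>x ^ m * decay_poly p x\<bar> \<le> B" and "0 < c" "c \<le> \<xi>" "0 < v"
  shows "\<bar>v ^ m * decay_poly p (v * \<xi>)\<bar> \<le> B / c ^ m"
proof -
  have "\<xi> > 0" "B \<ge> 0"
    using assms B[rule_format, of 0] by (auto simp: power_0_left split: if_splits)
  have "\<bar>v ^ m * decay_poly p (v * \<xi>)\<bar> = \<bar>(v * \<xi>) ^ m * decay_poly p (v * \<xi>)\<bar> / \<xi> ^ m"
    using \<open>\<xi> > 0\<close> by (simp add: power_mult_distrib abs_mult)
  also have "\<dots> \<le> B / \<xi> ^ m"
    using B \<open>0 < v\<close> \<open>\<xi> > 0\<close> by (intro divide_right_mono) auto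
  also have "\<dots> \<le> B / c ^ m"
    using assms \<open>B \<ge> 0\<close> by (intro divide_left_mono power_mono mult_pos_pos) auto
  finally show ?thesis .
qed

definition kernel_transform :: "(real \<Rightarrow> real) \<Rightarrow> real poly \<Rightarrow> nat \<Rightarrow> real \<Rightarrow> real" where
  "kernel_transform g p m \<xi> = (LINT v|lborel. g v * (v ^ m * decay_poly p (v * \<xi>)))"

lemma kernel_integrand_has_real_derivative:
  "((\<lambda>\<xi>. g v * (v ^ m * decay_poly p (v * \<xi>))) has_real_derivative
     g v * (v ^ Suc m * decay_poly (decay_pderiv p) (v * \<xi>))) (at \<xi>)"
proof -
  have "((\<lambda>\<xi>. decay_poly p (v * \<xi>)) has_real_derivative decay_poly (decay_pderiv p) (v * \<xi>) * v) (at \<xi>)"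
    by (rule DERIV_chain2[OF decay_poly_has_real_derivative]) (auto intro!: derivative_eq_intros)
  from DERIV_cmult[OF this, of "g v * v ^ m"] show ?thesis
    by (simp add: mult_ac)
qed

lemma borel_measurable_decay_poly_scaled [measurable]:
  "(\<lambda>v. decay_poly p (v * \<xi>)) \<in> borel_measurable borel"
proof -
  have "continuous_on UNIV (\<lambda>v. decay_poly p (v * \<xi>))"
    by (intro continuous_intros continuous_on_compose2[OF continuous_on_decay_poly[of UNIV]]) auto
  then show ?thesis
    using borel_measurable_continuous_onI by simp
qed

text \<open>The \<open>n\<close>-th derivative of \<open>\<xi> \<mapsto> 2\<xi> \<cdot> kernel_transform g p 0 \<xi>\<close>, by the Leibniz rule.\<close>

definition gamma_deriv :: "(real \<Rightarrow> real) \<Rightarrow> real poly \<Rightarrow> nat \<Rightarrow> real \<Rightarrow> real" where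
  "gamma_deriv g p n \<xi> =
     2 * \<xi> * kernel_transform g ((decay_pderiv ^^ n) p) n \<xi>
     + 2 * real n * kernel_transform g ((decay_pderiv ^^ (n - 1)) p) (n - 1) \<xi>"

context
  fixes g :: "real \<Rightarrow> real"
  assumes integrable_g: "integrable lborel g"
    and g_nonpos: "\<And>v. v \<le> 0 \<Longrightarrow> g v = 0"
begin

lemma kernel_integrand_bound:
  assumes "0 < c"
  shows "\<exists>C. \<forall>\<xi>\<ge>c. \<forall>v. \<bar>g v * (v ^ m * decay_poly p (v * \<xi>))\<bar> \<le> \<bar>g v\<bar> * C"
proof -
  obtain B where B: "\<forall>x\<ge>0. \<bar>x ^ m * decay_poly p x\<bar> \<le> B"
    using decay_poly_bounded[of "monom 1 m * p"] by (auto simp: power_mult_decay_poly)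
  have "\<bar>g v * (v ^ m * decay_poly p (v * \<xi>))\<bar> \<le> \<bar>g v\<bar> * (B / c ^ m)" if "c \<le> \<xi>" for \<xi> v
  proof (cases "v > 0")
    case True
    then show ?thesis
      unfolding abs_mult[of "g v"]
      by (intro mult_left_mono decay_poly_scaled_bound[OF B \<open>0 < c\<close> that]) auto
  qed (simp add: g_nonpos)
  then show ?thesis
    by blast
qed

lemma integrable_kernel_integrand:
  assumes "0 < \<xi>"
  shows "integrable lborel (\<lambda>v. g v * (v ^ m * decay_poly p (v * \<xi>)))"
proof -
  obtain C where C: "\<forall>v. \<bar>g v * (v ^ m * decay_poly p (v * \<xi>))\<bar> \<le> \<bar>g v\<bar> * C"
    using kernel_integrand_bound[OF assms, of m p] by auto
  have [measurable]: "g \<in> borel_measurable lborel"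
    using integrable_g by auto
  show ?thesis
    by (rule Bochner_Integration.integrable_bound[of _ "\<lambda>v. \<bar>g v\<bar> * C"])
       (use integrable_g C in \<open>auto intro: order_trans[OF _ abs_ge_self]\<close>)
qed

lemma kernel_transform_has_real_derivative:
  assumes "0 < \<xi>"
  shows "(kernel_transform g p m has_real_derivative
          kernel_transform g (decay_pderiv p) (Suc m) \<xi>) (at \<xi>)"
proof -
  obtain C where C: "\<forall>\<eta>\<ge>\<xi>/2. \<forall>v.
      \<bar>g v * (v ^ Suc m * decay_poly (decay_pderiv p) (v * \<eta>))\<bar> \<le> \<bar>g v\<bar> * C"
    using kernel_integrand_bound[of "\<xi>/2" "Suc m" "decay_pderiv p"] assms by auto
  have near: "\<eta> \<in> ball \<xi> (\<xi>/2) \<Longrightarrow> \<xi>/2 \<le> \<eta> \<and> 0 < \<eta>" for \<eta>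
    using assms by (auto simp: dist_real_def abs_if split: if_splits)
  show ?thesis
    unfolding kernel_transform_def
  proof (rule has_real_derivative_integral[where w="\<lambda>v. \<bar>g v\<bar> * C" and r="\<xi>/2"
        and f="\<lambda>\<eta> v. g v * (v ^ m * decay_poly p (v * \<eta>))"
        and f'="\<lambda>\<eta> v. g v * (v ^ Suc m * decay_poly (decay_pderiv p) (v * \<eta>))"])
    show "integrable lborel (\<lambda>v. \<bar>g v\<bar> * C)"
      using integrable_g by auto
    show "integrable lborel (\<lambda>v. g v * (v ^ m * decay_poly p (v * \<eta>)))"
      if "\<eta> \<in> ball \<xi> (\<xi>/2)" for \<eta>
      using near[OF that] by (intro integrable_kernel_integrand) auto
    show "(\<lambda>v. g v * (v ^ Suc m * decay_poly (decay_pderiv p) (v * \<xi>))) \<in> borel_measurable lborel"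
      using integrable_kernel_integrand[OF assms, of "Suc m"] by (rule borel_measurable_integrable)
    show "\<bar>g v * (v ^ Suc m * decay_poly (decay_pderiv p) (v * \<eta>))\<bar> \<le> \<bar>g v\<bar> * C"
      if "\<eta> \<in> ball \<xi> (\<xi>/2)" for \<eta> v
      using C near[OF that] by blast
  qed (use assms kernel_integrand_has_real_derivative in auto)
qed

lemma power_mult_kernel_transform_tendsto_0:
  "((\<lambda>\<xi>. \<xi> ^ m * kernel_transform g p m \<xi>) \<longlongrightarrow> 0) at_top"
proof -
  obtain B where B: "\<forall>x\<ge>0. \<bar>x ^ m * decay_poly p x\<bar> \<le> B"
    using decay_poly_bounded[of "monom 1 m * p"] by (auto simp: power_mult_decay_poly)
  define s where "s \<xi> v = g v * ((v * \<xi>) ^ m * decay_poly p (v * \<xi>))" for \<xi> v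
  have [measurable]: "g \<in> borel_measurable lborel"
    using integrable_g by auto
  have "((\<lambda>\<xi>. LINT v|lborel. s \<xi> v) \<longlongrightarrow> (LINT (v::real)|lborel. 0)) at_top"
  proof (rule integral_dominated_convergence_at_top[where w="\<lambda>v. \<bar>g v\<bar> * B" and s=s
        and f="\<lambda>v. 0" and M=lborel])
    show "s \<xi> \<in> borel_measurable lborel" for \<xi>
      unfolding s_def by measurable
    show "integrable lborel (\<lambda>v. \<bar>g v\<bar> * B)"
      using integrable_g by auto
    show "AE v in lborel. ((\<lambda>\<xi>. s \<xi> v) \<longlongrightarrow> 0) at_top"
    proof (intro AE_I2)
      fix v :: real
      show "((\<lambda>\<xi>. s \<xi> v) \<longlongrightarrow> 0) at_top"
      proof (cases "v > 0")
        case True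
        have "filterlim (\<lambda>\<xi>. v * \<xi>) at_top at_top"
          using True by (intro filterlim_tendsto_pos_mult_at_top[OF tendsto_const _ filterlim_ident])
        from filterlim_compose[OF decay_poly_tendsto_0[of "monom 1 m * p"] this]
        have "((\<lambda>\<xi>. (v * \<xi>) ^ m * decay_poly p (v * \<xi>)) \<longlongrightarrow> 0) at_top"
          by (simp add: o_def power_mult_decay_poly)
        from tendsto_mult_right_zero[OF this, of "g v"] show ?thesis
          by (simp add: s_def)
      qed (simp add: s_def g_nonpos)
    qed
    show "\<forall>\<^sub>F \<xi> in at_top. AE v in lborel. norm (s \<xi> v) \<le> \<bar>g v\<bar> * B"
      using eventually_gt_at_top[of 0]
    proof eventually_elim
      case (elim \<xi>)
      have "norm (s \<xi> v) \<le> \<bar>g v\<bar> * B" for v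
      proof (cases "v > 0")
        case True
        then have "\<bar>(v * \<xi>) ^ m * decay_poly p (v * \<xi>)\<bar> \<le> B"
          using B elim by auto
        then show ?thesis
          unfolding s_def real_norm_def abs_mult[of "g v"] by (intro mult_left_mono) auto
      qed (simp add: s_def g_nonpos)
      then show ?case
        by simp
    qed
  qed simp
  moreover have "\<xi> ^ m * kernel_transform g p m \<xi> = (LINT v|lborel. s \<xi> v)" for \<xi>
    unfolding kernel_transform_def s_def
    by (simp flip: integral_mult_right_zero add: power_mult_distrib mult_ac)
  ultimately show ?thesis
    by simp
qed

lemma power_mult_kernel_transform_tendsto_0_le:
  assumes "j \<le> m"
  shows "((\<lambda>\<xi>. \<xi> ^ j * kernel_transform g p m \<xi>) \<longlongrightarrow> 0) at_top"
proof -
  have "((\<lambda>\<xi>. (\<xi> ^ m * kernel_transform g p m \<xi>) * inverse \<xi> ^ (m - j)) \<longlongrightarrow> 0 * 0 ^ (m - j)) at_top"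
    by (intro tendsto_mult tendsto_power tendsto_inverse_0_at_top filterlim_ident
        power_mult_kernel_transform_tendsto_0)
  moreover have "\<forall>\<^sub>F \<xi> in at_top. (\<xi> ^ m * kernel_transform g p m \<xi>) * inverse \<xi> ^ (m - j)
      = \<xi> ^ j * kernel_transform g p m \<xi>"
    using eventually_gt_at_top[of 0]
  proof eventually_elim
    case (elim \<xi>)
    have "\<xi> ^ m = \<xi> ^ j * \<xi> ^ (m - j)"
      using assms by (simp flip: power_add)
    with elim show ?case
      by (simp add: power_inverse field_simps)
  qed
  ultimately show ?thesis
    by (simp add: Lim_transform_eventually)
qed

lemma gamma_deriv_has_real_derivative:
  assumes "0 < \<xi>"
  shows "(gamma_deriv g p n has_real_derivative gamma_deriv g p (Suc n) \<xi>) (at \<xi>)"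
proof -
  let ?\<Phi> = "\<lambda>j. kernel_transform g ((decay_pderiv ^^ j) p) j"
  have "(gamma_deriv g p n has_real_derivative
      2 * ?\<Phi> n \<xi> + 2 * \<xi> * ?\<Phi> (Suc n) \<xi> + 2 * real n * ?\<Phi> (Suc (n - 1)) \<xi>) (at \<xi>)"
    unfolding gamma_deriv_def
    by (auto intro!: derivative_eq_intros kernel_transform_has_real_derivative[OF assms])
  moreover have "2 * ?\<Phi> n \<xi> + 2 * \<xi> * ?\<Phi> (Suc n) \<xi> + 2 * real n * ?\<Phi> (Suc (n - 1)) \<xi>
      = gamma_deriv g p (Suc n) \<xi>"
    by (cases n) (simp_all add: gamma_deriv_def algebra_simps)
  ultimately show ?thesis
    by simp
qed

lemma gamma_deriv_tendsto_0:
  assumes "1 \<le> n"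
  shows "(gamma_deriv g p n \<longlongrightarrow> 0) at_top"
proof -
  have "((\<lambda>\<xi>. 2 * (\<xi> ^ 1 * kernel_transform g ((decay_pderiv ^^ n) p) n \<xi>)
      + 2 * real n * (\<xi> ^ 0 * kernel_transform g ((decay_pderiv ^^ (n - 1)) p) (n - 1) \<xi>))
      \<longlongrightarrow> 2 * 0 + 2 * real n * 0) at_top"
    using assms by (intro tendsto_intros power_mult_kernel_transform_tendsto_0_le) auto
  then show ?thesis
    by (simp add: gamma_deriv_def[abs_def] mult.assoc)
qed

end

definition scaled_laguerre_poly :: "nat \<Rightarrow> real poly" where
  "scaled_laguerre_poly k = (\<Sum>i=0..k. monom ((-1) ^ i * real (k choose i) * 2 ^ i / fact i) i)"

lemma poly_scaled_laguerre_poly: "poly (scaled_laguerre_poly k) x = laguerre k (2 * x)"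
  unfolding scaled_laguerre_poly_def laguerre_def poly_sum poly_monom
  by (rule sum.cong) (auto simp: power_mult_distrib)

lemma laguerre_fun_square:
  "(laguerre_fun k (2 * x))\<^sup>2 = decay_poly ((scaled_laguerre_poly k)\<^sup>2) x"
proof -
  have "exp (- (2 * x) / 2) ^ 2 = exp (- 2 * x)"
    by (simp add: power2_eq_square flip: exp_add)
  then show ?thesis
    unfolding laguerre_fun_def decay_poly_def poly_power poly_scaled_laguerre_poly
    by (simp add: power_mult_distrib)
qed

lemma gamma_ak_eq_kernel_transform:
  "gamma_ak a k \<xi> =
     2 * \<xi> * kernel_transform (\<lambda>v. indicator {0<..} v * a v) ((scaled_laguerre_poly k)\<^sup>2) 0 \<xi>"
  unfolding gamma_ak_def kernel_transform_def set_lebesgue_integral_def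
  by (simp add: mult.assoc laguerre_fun_square)

theorem mainTheorem6:
  fixes a :: "real \<Rightarrow> real" and k :: nat
  assumes a_L1: "set_integrable lborel {0<..} a"
    and gamma_Linf: "\<exists>C. AE \<xi> in lebesgue_on {0<..}. \<bar>gamma_ak a k \<xi>\<bar> \<le> C"
  shows "\<forall>n\<ge>1. (\<forall>\<xi>>0. ((deriv ^^ (n - 1)) (gamma_ak a k)) differentiable (at \<xi>))
              \<and> (((deriv ^^ n) (gamma_ak a k)) \<longlongrightarrow> 0) at_top"
proof -
  define g where "g v = indicator {0<..} v * a v" for v :: real
  have g: "integrable lborel g"
    using a_L1 by (simp add: g_def[abs_def] set_integrable_def)
  have g_nonpos: "\<And>v. v \<le> 0 \<Longrightarrow> g v = 0"
    by (simp add: g_def)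
  let ?G = "gamma_deriv g ((scaled_laguerre_poly k)\<^sup>2)"
  have G_deriv: "\<And>n \<xi>. \<xi> \<in> {0<..} \<Longrightarrow> (?G n has_real_derivative ?G (Suc n) \<xi>) (at \<xi>)"
    using gamma_deriv_has_real_derivative[OF g g_nonpos] by simp
  have deriv_eq: "\<And>n \<xi>. \<xi> \<in> {0<..} \<Longrightarrow> (deriv ^^ n) (gamma_ak a k) \<xi> = ?G n \<xi>"
    by (rule deriv_funpow_eq_on_open[where G="?G", OF open_greaterThan _ G_deriv])
       (auto simp: gamma_ak_eq_kernel_transform gamma_deriv_def g_def[abs_def])
  show ?thesis
  proof (intro allI impI conjI)
    fix n :: nat and \<xi> :: real
    assume "0 < \<xi>"
    have "((deriv ^^ (n - 1)) (gamma_ak a k) has_real_derivative ?G (Suc (n - 1)) \<xi>) (at \<xi>)"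
      by (rule has_field_derivative_transform_within_open[OF G_deriv open_greaterThan])
         (use \<open>0 < \<xi>\<close> deriv_eq in auto)
    then show "(deriv ^^ (n - 1)) (gamma_ak a k) differentiable (at \<xi>)"
      using real_differentiable_def by blast
  next
    fix n :: nat
    assume "1 \<le> n"
    have "\<forall>\<^sub>F \<xi> in at_top. ?G n \<xi> = (deriv ^^ n) (gamma_ak a k) \<xi>"
      using eventually_gt_at_top[of 0] by eventually_elim (simp add: deriv_eq)
    with gamma_deriv_tendsto_0[OF g g_nonpos \<open>1 \<le> n\<close>]
    show "((deriv ^^ n) (gamma_ak a k) \<longlongrightarrow> 0) at_top"
      by (rule Lim_transform_eventually)
  qed
qed

end
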